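(* Let $q$ be a power of an odd prime, $q\ge m+1$, $\ell=2^m$ with $m\ge 2$, and let $\{\mathcal{X}_i=(X_i,X'_i)\}_{i=0}^{m-1}$ be the matchings defined in the context. Let $\lambda_0,\dots,\lambda_{m-1}\in\mathbb{F}_q^*$ be pairwise distinct with $\lambda_{2t}=-\lambda_{2t+1}$ for every $t\in\{0,\dots,\lfloor m/2\rfloor-1\}$. Then for every $i\ne j$, the pairs $(\mathcal{X}_i,\lambda_i)$ and $(\mathcal{X}_j,\lambda_j)$ satisfy conditions (B1)–(B3) (with $(\mathcal{X},\lambda_x)=(\mathcal{X}_i,\lambda_i)$, $(\mathcal{Y},\lambda_y)=(\mathcal{X}_j,\lambda_j)$).
   Context: Identify $e_i\in\mathbb{F}_q^{2^m}$ with the length-$m$ binary string of $i$, entries indexed $0,\dots,m-1$ (entry $0$ most significant). The boolean cube $C(\{(i_j,b_j)\}_{j=1}^k)$ is the lexicographically ordered sequence of binary strings having bit $b_j$ in entry $i_j$ for all $j$; $\circ$ is concatenation. For $t\in\{0,\dots,\lfloor m/2\rfloor-1\}$: $X_{2t}=C(\{(2t,0),(2t+1,0)\})\circ C(\{(2t,0),(2t+1,1)\})$, $X'_{2t}=C(\{(2t,1),(2t+1,0)\})\circ C(\{(2t,1),(2t+1,1)\})$, $X_{2t+1}=C(\{(2t,0),(2t+1,0)\})\circ C(\{(2t,1),(2t+1,0)\})$, $X'_{2t+1}=C(\{(2t,0),(2t+1,1)\})\circ C(\{(2t,1),(2t+1,1)\})$; if $m$ odd, $X_{m-1}=C(\{(m-1,0)\})$,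 $X'_{m-1}=C(\{(m-1,1)\})$. Writing $\mathcal{X}=(X,X')$, $X=(x_0,\dots,x_{\ell/2-1})$, $X'=(x'_0,\dots)$ and similarly $\mathcal{Y}=(Y,Y')$, the conditions are: (B1) $\lambda_x\ne\lambda_y$; (B2) every edge $\{x_s,x'_s\}$ of $\mathcal{X}$ lies in $Y$ or in $Y'$ and every edge $\{y_s,y'_s\}$ of $\mathcal{Y}$ lies in $X$ or in $X'$ (pairing condition); (B3) if $\lambda_x=-\lambda_y$ then for all $i$: if $(x_i,x'_i)=(y_j,y_t)$ then $i\le\ell/4-1$, $j\le\ell/4-1$, $t>\ell/4-1$; and if $(x_i,x'_i)=(y'_j,y'_t)$ then $i>\ell/4-1$, $j\le\ell/4-1$, $t>\ell/4-1$. *)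

theory Defs
  imports "HOL-Computational_Algebra.Primes" "HOL-Library.Cardinality"
begin

text \<open>Vertex e_i is identified with i in {0..<2^m}; entry k (k < m, entry 0 most
significant) of the length-m binary string of i.\<close>
definition bit_entry :: "nat \<Rightarrow> nat \<Rightarrow> nat \<Rightarrow> nat" where
  "bit_entry m k x = (x div 2 ^ (m - 1 - k)) mod 2"

text \<open>Boolean cube C({(i_j,b_j)}): lexicographically (= numerically) ordered list of
length-m strings with bit b_j in entry i_j.\<close>
definition cube :: "nat \<Rightarrow> (nat \<times> nat) list \<Rightarrow> nat list" where
  "cube m cs = filter (\<lambda>x. \<forall>(k, b) \<in> set cs. bit_entry m k x = b) [0..<2 ^ m]"

definition matching :: "nat \<Rightarrow> nat \<Rightarrow> nat list \<times> nat list" where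
  "matching m i =
    (if i < 2 * (m div 2) then
       (if even i then
          (cube m [(i,0),(i+1,0)] @ cube m [(i,0),(i+1,1)],
           cube m [(i,1),(i+1,0)] @ cube m [(i,1),(i+1,1)])
        else
          (cube m [(i-1,0),(i,0)] @ cube m [(i-1,1),(i,0)],
           cube m [(i-1,0),(i,1)] @ cube m [(i-1,1),(i,1)]))
     else (cube m [(m-1,0)], cube m [(m-1,1)]))"

definition condB1 :: "'a \<Rightarrow> 'a \<Rightarrow> bool" where
  "condB1 lx ly \<longleftrightarrow> lx \<noteq> ly"

definition condB2 :: "nat \<Rightarrow> nat list \<times> nat list \<Rightarrow> nat list \<times> nat list \<Rightarrow> bool" where
  "condB2 l XX YY \<longleftrightarrow>
     (let (X, X') = XX; (Y, Y') = YY in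
      (\<forall>s < l div 2. {X ! s, X' ! s} \<subseteq> set Y \<or> {X ! s, X' ! s} \<subseteq> set Y') \<and>
      (\<forall>s < l div 2. {Y ! s, Y' ! s} \<subseteq> set X \<or> {Y ! s, Y' ! s} \<subseteq> set X'))"

definition condB3 :: "nat \<Rightarrow> nat list \<times> nat list \<Rightarrow> 'a::ab_group_add \<Rightarrow>
    nat list \<times> nat list \<Rightarrow> 'a \<Rightarrow> bool" where
  "condB3 l XX lx YY ly \<longleftrightarrow>
     (let (X, X') = XX; (Y, Y') = YY in
      lx = - ly \<longrightarrow>
        (\<forall>i < l div 2. \<forall>j < l div 2. \<forall>t < l div 2.
           ((X ! i, X' ! i) = (Y ! j, Y ! t) \<longrightarrow>
               i \<le> l div 4 - 1 \<and> j \<le> l div 4 - 1 \<and> t > l div 4 - 1) \<and>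
           ((X ! i, X' ! i) = (Y' ! j, Y' ! t) \<longrightarrow>
               i > l div 4 - 1 \<and> j \<le> l div 4 - 1 \<and> t > l div 4 - 1)))"

end

theory Submission
  imports Defs
begin

text \<open>Setting entry \<open>i\<close> of a string whose entry \<open>i\<close> is 0 means adding \<open>2^(m-1-i)\<close>, and this is
  order preserving, so \<open>X'\<^sub>i\<close> is \<open>X\<^sub>i\<close> with entry \<open>i\<close> flipped position by position, while the
  other entries are untouched. Hence each edge of \<open>\<X>\<^sub>i\<close> lies on one side of \<open>\<X>\<^sub>j\<close> (B2).
  For a paired index \<open>i\<close> with partner \<open>i'\<close> (\<open>{i, i'} = {2t, 2t+1}\<close>), entry \<open>i'\<close> of the \<open>s\<close>-th
  vertex of \<open>X\<^sub>i\<close> or \<open>X'\<^sub>i\<close> is 0 exactly for \<open>s < \<ell>/4\<close>. By distinctness of the labels,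
  \<open>\<lambda>\<^sub>x = -\<lambda>\<^sub>y\<close> only happens for partners, and then reading off entries \<open>i\<close> and \<open>i'\<close> of the
  identified vertices locates all indices in (B3).\<close>

lemma bit_entry_eq_bit: "bit_entry m k x = of_bool (bit x (m - 1 - k))"
  unfolding bit_entry_def by (simp add: bit_iff_odd odd_iff_mod_2_eq_one even_iff_mod_2_eq_zero)

lemma bit_entry_cases: "bit_entry m k x = 0 \<or> bit_entry m k x = 1"
  by (simp add: bit_entry_eq_bit)

lemma bit_entry_eq_1_iff: "bit_entry m k x = 1 \<longleftrightarrow> bit x (m - 1 - k)"
  by (simp add: bit_entry_eq_bit)

lemma bit_entry_eq_0_iff: "bit_entry m k x = 0 \<longleftrightarrow> \<not> bit x (m - 1 - k)"
  by (simp add: bit_entry_eq_bit)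

lemma add_pow_bit_entry:
  fixes x :: nat
  assumes "i < m" "x < 2 ^ m" "bit_entry m i x = 0"
  shows "x + 2 ^ (m - 1 - i) < 2 ^ m"
    and "k < m \<Longrightarrow> bit_entry m k (x + 2 ^ (m - 1 - i)) = (if k = i then 1 else bit_entry m k x)"
proof -
  have "\<not> bit x (m - 1 - i)" using assms(3) by (simp add: bit_entry_eq_bit)
  then have set_bit: "x + 2 ^ (m - 1 - i) = set_bit (m - 1 - i) x" by (simp add: set_bit_eq)
  have "take_bit m x = x" using assms(2) by (simp add: take_bit_nat_eq_self_iff)
  moreover have "\<not> m \<le> m - 1 - i" using assms(1) by simp
  ultimately have "take_bit m (set_bit (m - 1 - i) x) = set_bit (m - 1 - i) x"
    by (simp add: take_bit_set_bit_eq)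
  then show "x + 2 ^ (m - 1 - i) < 2 ^ m"
    unfolding set_bit by (simp add: take_bit_nat_eq_self_iff)
  show "k < m \<Longrightarrow> bit_entry m k (x + 2 ^ (m - 1 - i)) = (if k = i then 1 else bit_entry m k x)"
    using assms(1) unfolding set_bit by (auto simp: bit_entry_eq_bit bit_set_bit_iff)
qed

lemma set_cube: "set (cube m cs) = {x. x < 2 ^ m \<and> (\<forall>(k, b) \<in> set cs. bit_entry m k x = b)}"
  unfolding cube_def by auto

lemma sorted_cube: "sorted_wrt (<) (cube m cs)"
  unfolding cube_def by (intro sorted_wrt_filter) (simp add: sorted_wrt_upt)

lemma cube_cong: "set cs = set ds \<Longrightarrow> cube m cs = cube m ds"
  unfolding cube_def by simp

lemma cube_Cons: "cube m ((k, b) # cs) = filter (\<lambda>x. bit_entry m k x = b) (cube m cs)"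
  unfolding cube_def filter_filter by (rule filter_cong) auto

lemma cube_Cons_1:
  assumes "p < m" "\<forall>(k, b) \<in> set cs. k < m \<and> k \<noteq> p"
  shows "cube m ((p, 1) # cs) = map (\<lambda>x. x + 2 ^ (m - 1 - p)) (cube m ((p, 0) # cs))"
proof (rule sorted_distinct_set_unique)
  let ?f = "\<lambda>x::nat. x + 2 ^ (m - 1 - p)"
  have lt: "sorted_wrt (<) (map ?f (cube m ((p, 0) # cs)))"
    using sorted_cube[of m "(p, 0) # cs"] by (simp add: sorted_wrt_map)
  show "sorted (cube m ((p, 1) # cs))" "distinct (cube m ((p, 1) # cs))"
    using sorted_cube strict_sorted_iff by blast+
  show "sorted (map ?f (cube m ((p, 0) # cs)))" "distinct (map ?f (cube m ((p, 0) # cs)))"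
    using lt strict_sorted_iff by blast+
  show "set (cube m ((p, 1) # cs)) = set (map ?f (cube m ((p, 0) # cs)))"
  proof (intro set_eqI iffI)
    fix y :: nat assume "y \<in> set (cube m ((p, 1) # cs))"
    then have y: "y < 2 ^ m" "bit_entry m p y = 1" "\<forall>(k, b) \<in> set cs. bit_entry m k y = b"
      by (auto simp: set_cube)
    define n where "n = m - 1 - p"
    have "bit y n" using y(2) unfolding bit_entry_eq_1_iff n_def .
    define x where "x = unset_bit n y"
    have "y = set_bit n x"
      unfolding x_def by (rule bit_eqI) (auto simp: bit_set_bit_iff bit_unset_bit_iff \<open>bit y n\<close>)
    then have y_eq: "y = ?f x" by (simp add: set_bit_eq x_def bit_unset_bit_iff n_def)
    have x: "x < 2 ^ m" "bit_entry m p x = 0"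
      using y(1) y_eq by linarith (simp add: x_def n_def bit_entry_eq_0_iff bit_unset_bit_iff)
    have "bit_entry m k x = b" if kb: "(k, b) \<in> set cs" for k b
    proof -
      have "k < m" "k \<noteq> p" using kb assms(2) by auto
      then show ?thesis using kb y(3) add_pow_bit_entry(2)[OF assms(1) x, of k] y_eq by auto
    qed
    then show "y \<in> set (map ?f (cube m ((p, 0) # cs)))"
      using x by (auto simp: set_cube y_eq)
  next
    fix y :: nat assume "y \<in> set (map ?f (cube m ((p, 0) # cs)))"
    then obtain x where y_eq: "y = ?f x" and x: "x < 2 ^ m" "bit_entry m p x = 0"
      and cs: "\<forall>(k, b) \<in> set cs. bit_entry m k x = b"
      by (auto simp: set_cube)
    have "bit_entry m k y = b" if kb: "(k, b) \<in> set cs" for k b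
    proof -
      have "k < m" "k \<noteq> p" using kb assms(2) by auto
      then show ?thesis using kb cs add_pow_bit_entry(2)[OF assms(1) x, of k] y_eq by auto
    qed
    moreover have "y < 2 ^ m" "bit_entry m p y = 1"
      using add_pow_bit_entry[OF assms(1) x] assms(1) y_eq by auto
    ultimately show "y \<in> set (cube m ((p, 1) # cs))"
      by (auto simp: set_cube)
  qed
qed

lemma length_cube:
  assumes "distinct (map fst cs)" "\<forall>(k, b) \<in> set cs. k < m \<and> b \<le> 1"
  shows "length (cube m cs) = 2 ^ (m - length cs)"
  using assms
proof (induction cs)
  case Nil
  show ?case by (simp add: cube_def)
next
  case (Cons kb cs)
  obtain p b where kb: "kb = (p, b)" by fastforce
  have p: "p < m" "\<forall>(k, b) \<in> set cs. k < m \<and> k \<noteq> p" "b \<le> 1"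
    using Cons.prems by (force simp: kb)+
  have "length (cube m ((p, 0) # cs)) + length (cube m ((p, 1) # cs)) = length (cube m cs)"
  proof -
    have "(bit_entry m p x \<noteq> 0) = (bit_entry m p x = 1)" for x
      using bit_entry_cases[of m p x] by linarith
    then show ?thesis
      using sum_length_filter_compl[of "\<lambda>x. bit_entry m p x = 0" "cube m cs"] by (simp add: cube_Cons)
  qed
  moreover have "length (cube m ((p, 1) # cs)) = length (cube m ((p, 0) # cs))"
    using cube_Cons_1[OF p(1,2)] by simp
  moreover have "length cs < m"
  proof -
    have "fst ` set (kb # cs) \<subseteq> {..<m}" using Cons.prems(2) by auto
    then have "card (set (map fst (kb # cs))) \<le> m" by (metis card_lessThan card_mono finite_lessThan set_map)
    then show ?thesis using Cons.prems(1) distinct_card by fastforce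
  qed
  moreover have "length (cube m cs) = 2 ^ (m - length cs)"
    using Cons by simp
  moreover have "m - length cs = Suc (m - Suc (length cs))"
    using \<open>length cs < m\<close> by simp
  ultimately have "length (cube m ((p, c) # cs)) = 2 ^ (m - Suc (length cs))" if "c \<le> 1" for c
    using that by (auto simp: le_Suc_eq)
  then show ?case using p(3) by (simp add: kb)
qed

definition partner :: "nat \<Rightarrow> nat" where
  "partner i = (if even i then i + 1 else i - 1)"

lemma partner_partner: "partner (partner i) = i"
  by (simp add: partner_def)

lemma partner_neq: "partner i \<noteq> i"
  unfolding partner_def by presburger

lemma partner_less: "i < 2 * (m div 2) \<Longrightarrow> partner i < 2 * (m div 2)"
  by (simp add: partner_def) presburger

lemma two_le_if_paired: "i < 2 * (m div 2) \<Longrightarrow> 2 \<le> (m::nat)"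
  by presburger

lemma matching_paired:
  assumes "i < 2 * (m div 2)"
  shows "matching m i =
    (cube m [(i, 0), (partner i, 0)] @ cube m [(i, 0), (partner i, 1)],
     cube m [(i, 1), (partner i, 0)] @ cube m [(i, 1), (partner i, 1)])"
proof (cases "even i")
  case True
  then show ?thesis using assms by (simp add: matching_def partner_def)
next
  case False
  have swap: "cube m [(i - Suc 0, b), (i, c)] = cube m [(i, c), (i - Suc 0, b)]" for b c
    by (rule cube_cong) auto
  show ?thesis using assms False by (simp add: matching_def partner_def swap)
qed

lemma matching_unpaired:
  assumes "i < m" "\<not> i < 2 * (m div 2)"
  shows "matching m i = (cube m [(i, 0)], cube m [(i, 1)])"
proof -
  have "i = m - 1" using assms by presburger
  then show ?thesis using assms(2) by (simp add: matching_def)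
qed

lemma snd_matching:
  assumes "i < m"
  shows "snd (matching m i) = map (\<lambda>x. x + 2 ^ (m - 1 - i)) (fst (matching m i))"
proof (cases "i < 2 * (m div 2)")
  case True
  have "partner i < m" using partner_less[OF True] by linarith
  then have "cube m [(i, 1), (partner i, b)] = map (\<lambda>x. x + 2 ^ (m - 1 - i)) (cube m [(i, 0), (partner i, b)])"
    for b using cube_Cons_1[of i m "[(partner i, b)]"] assms partner_neq by auto
  then show ?thesis by (simp add: matching_paired[OF True])
next
  case False
  then show ?thesis using cube_Cons_1[of i m "[]"] assms by (simp add: matching_unpaired)
qed

lemma set_matching:
  assumes "i < m"
  shows "set (fst (matching m i)) = {x. x < 2 ^ m \<and> bit_entry m i x = 0}"
    and "set (snd (matching m i)) = {x. x < 2 ^ m \<and> bit_entry m i x = 1}"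
proof -
  have "set (fst (matching m i)) = {x. x < 2 ^ m \<and> bit_entry m i x = 0} \<and>
        set (snd (matching m i)) = {x. x < 2 ^ m \<and> bit_entry m i x = 1}"
  proof (cases "i < 2 * (m div 2)")
    case True
    then show ?thesis
      using bit_entry_cases[of m "partner i"] by (auto simp: matching_paired set_cube)
  next
    case False
    then show ?thesis using assms by (simp add: matching_unpaired set_cube)
  qed
  then show "set (fst (matching m i)) = {x. x < 2 ^ m \<and> bit_entry m i x = 0}"
    and "set (snd (matching m i)) = {x. x < 2 ^ m \<and> bit_entry m i x = 1}"
    by auto
qed

lemma length_quarter_cube:
  assumes "i < 2 * (m div 2)" "b \<le> 1" "c \<le> 1"
  shows "length (cube m [(i, b), (partner i, c)]) = 2 ^ m div 4"
proof -
  have "partner i < 2 * (m div 2)" using partner_less[OF assms(1)] .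
  then have "length (cube m [(i, b), (partner i, c)]) = 2 ^ (m - 2)"
    using assms partner_neq[of i] by (subst length_cube) auto
  moreover obtain k where "m = k + 2"
    using two_le_if_paired[OF assms(1)] le_add_diff_inverse2 by metis
  ultimately show ?thesis by simp
qed

lemma length_matching:
  assumes "i < m"
  shows "length (fst (matching m i)) = 2 ^ m div 2"
proof (cases "i < 2 * (m div 2)")
  case True
  then obtain k where "m = k + 2"
    using two_le_if_paired le_add_diff_inverse2 by metis
  then show ?thesis
    using length_quarter_cube[OF True] unfolding matching_paired[OF True] by simp
next
  case False
  then show ?thesis using assms by (subst matching_unpaired) (auto simp: length_cube power_diff)
qed

lemma length_snd_matching: "i < m \<Longrightarrow> length (snd (matching m i)) = 2 ^ m div 2"
  by (simp add: snd_matching length_matching)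

lemma nth_matching_bits:
  assumes "i < m" "s < 2 ^ m div 2"
  shows "fst (matching m i) ! s < 2 ^ m" "bit_entry m i (fst (matching m i) ! s) = 0"
    and "snd (matching m i) ! s < 2 ^ m" "bit_entry m i (snd (matching m i) ! s) = 1"
proof -
  have "fst (matching m i) ! s \<in> set (fst (matching m i))"
    "snd (matching m i) ! s \<in> set (snd (matching m i))"
    using assms length_matching length_snd_matching by simp_all
  then show "fst (matching m i) ! s < 2 ^ m" "bit_entry m i (fst (matching m i) ! s) = 0"
    "snd (matching m i) ! s < 2 ^ m" "bit_entry m i (snd (matching m i) ! s) = 1"
    unfolding set_matching[OF assms(1)] by simp_all
qed

lemma nth_snd_matching:
  "i < m \<Longrightarrow> s < 2 ^ m div 2 \<Longrightarrow> snd (matching m i) ! s = fst (matching m i) ! s + 2 ^ (m - 1 - i)"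
  by (simp add: snd_matching length_matching)

lemma nth_matching_partner_bits:
  assumes paired: "i < 2 * (m div 2)" and s: "s < 2 ^ m div 2"
  shows "bit_entry m (partner i) (fst (matching m i) ! s) = of_bool (2 ^ m div 4 \<le> s)"
    and "bit_entry m (partner i) (snd (matching m i) ! s) = of_bool (2 ^ m div 4 \<le> s)"
proof -
  let ?Q = "2 ^ m div 4" and ?A = "\<lambda>b. cube m [(i, 0), (partner i, b)]"
  have i: "i < m" and p: "partner i < m" "partner i \<noteq> i"
    using paired partner_less[OF paired] partner_neq[of i] by linarith+
  have A: "length (?A b) = ?Q" if "b \<le> 1" for b
    using length_quarter_cube[OF paired] that by simp
  have A_bits: "x \<in> set (?A b) \<Longrightarrow> bit_entry m (partner i) x = b" for x b
    by (simp add: set_cube)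
  have "s - ?Q < ?Q" if "?Q \<le> s"
    using s that length_matching[OF i] A by (simp add: matching_paired[OF paired])
  then show fst: "bit_entry m (partner i) (fst (matching m i) ! s) = of_bool (?Q \<le> s)"
    using A A_bits nth_mem by (auto simp: matching_paired[OF paired] nth_append)
  show "bit_entry m (partner i) (snd (matching m i) ! s) = of_bool (?Q \<le> s)"
    using fst p add_pow_bit_entry(2)[OF i nth_matching_bits(1,2)[OF i s] p(1)]
    by (simp add: nth_snd_matching[OF i s])
qed

lemma matching_edge_on_one_side:
  assumes "i < m" "j < m" "i \<noteq> j" "s < 2 ^ m div 2"
  shows "{fst (matching m i) ! s, snd (matching m i) ! s} \<subseteq> set (fst (matching m j))
       \<or> {fst (matching m i) ! s, snd (matching m i) ! s} \<subseteq> set (snd (matching m j))"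
proof -
  let ?x = "fst (matching m i) ! s" and ?x' = "snd (matching m i) ! s"
  have "bit_entry m j ?x' = bit_entry m j ?x"
    using add_pow_bit_entry(2)[OF assms(1) nth_matching_bits(1,2)[OF assms(1,4)] assms(2)] assms(3)
    by (simp add: nth_snd_matching[OF assms(1,4)])
  moreover have "?x < 2 ^ m" "?x' < 2 ^ m"
    using nth_matching_bits[OF assms(1,4)] by simp_all
  ultimately show ?thesis
    using bit_entry_cases[of m j ?x] by (auto simp: set_matching[OF assms(2)])
qed

lemma condB2_matching:
  assumes "i < m" "j < m" "i \<noteq> j"
  shows "condB2 (2 ^ m) (matching m i) (matching m j)"
  using matching_edge_on_one_side[OF assms] matching_edge_on_one_side[OF assms(2,1) assms(3)[symmetric]]
  by (simp add: condB2_def split_beta)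

lemma partner_label:
  fixes lam :: "nat \<Rightarrow> 'a::group_add"
  assumes neg: "\<forall>t < m div 2. lam (2 * t) = - lam (2 * t + 1)" and k: "k < 2 * (m div 2)"
  shows "lam (partner k) = - lam k"
proof -
  have "lam (2 * (k div 2)) = - lam (2 * (k div 2) + 1)" using neg k by simp
  then show ?thesis by (cases "even k") (auto simp: partner_def minus_equation_iff elim!: evenE oddE)
qed

lemma opposite_labels_imp_partner:
  fixes lam :: "nat \<Rightarrow> 'a::group_add"
  assumes "i < m" "j < m" "i \<noteq> j" "lam i = - lam j"
    and distinct: "\<forall>i < m. \<forall>j < m. i \<noteq> j \<longrightarrow> lam i \<noteq> lam j"
    and neg: "\<forall>t < m div 2. lam (2 * t) = - lam (2 * t + 1)"
  shows "i < 2 * (m div 2) \<and> j = partner i"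
proof -
  have unique: "l = partner k" if "k < 2 * (m div 2)" "l < m" "lam l = - lam k" for k l
  proof -
    have "partner k < m" using partner_less[OF that(1)] by linarith
    then show ?thesis using distinct that(2,3) partner_label[OF neg that(1)] by metis
  qed
  have "i < 2 * (m div 2) \<or> j < 2 * (m div 2)" using assms(1-3) by presburger
  then show ?thesis
  proof
    assume "i < 2 * (m div 2)"
    then show ?thesis using unique assms(2,4) by simp
  next
    assume j: "j < 2 * (m div 2)"
    then have "i = partner j" using unique assms(1,4) by simp
    then show ?thesis using partner_less[OF j] partner_partner by simp
  qed
qed

lemma condB3_partner:
  assumes paired: "i < 2 * (m div 2)"
  shows "condB3 (2 ^ m) (matching m i) lx (matching m (partner i)) ly"
proof -
  let ?Q = "(2::nat) ^ m div 4" and ?j = "partner i"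
  let ?X = "fst (matching m i)" and ?X' = "snd (matching m i)"
  let ?Y = "fst (matching m ?j)" and ?Y' = "snd (matching m ?j)"
  have j: "?j < 2 * (m div 2)" using partner_less[OF paired] .
  then have i_m: "i < m" and j_m: "?j < m" using paired by linarith+
  obtain k where "m = k + 2"
    using two_le_if_paired[OF paired] le_add_diff_inverse2 by metis
  then have Q: "?Q \<ge> 1" by simp
  have own: "bit_entry m i (?X ! s) = 0" "bit_entry m i (?X' ! s) = 1"
    "bit_entry m ?j (?Y ! s) = 0" "bit_entry m ?j (?Y' ! s) = 1" if "s < 2 ^ m div 2" for s
    using nth_matching_bits[OF i_m that] nth_matching_bits[OF j_m that] by simp_all
  have cross: "bit_entry m ?j (?X ! s) = of_bool (?Q \<le> s)" "bit_entry m ?j (?X' ! s) = of_bool (?Q \<le> s)"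
    "bit_entry m i (?Y ! s) = of_bool (?Q \<le> s)" "bit_entry m i (?Y' ! s) = of_bool (?Q \<le> s)"
    if "s < 2 ^ m div 2" for s
    using nth_matching_partner_bits[OF paired that] nth_matching_partner_bits[OF j that]
    by (simp_all add: partner_partner)
  show ?thesis
    unfolding condB3_def Let_def split_beta
  proof (intro impI allI conjI)
    fix a b c :: nat assume abc: "a < 2 ^ m div 2" "b < 2 ^ m div 2" "c < 2 ^ m div 2"
    {
      assume "(?X ! a, ?X' ! a) = (?Y ! b, ?Y ! c)"
      then have e: "?X ! a = ?Y ! b" "?X' ! a = ?Y ! c" by simp_all
      have "\<not> ?Q \<le> a" using cross(1)[OF abc(1)] own(3)[OF abc(2)] e(1) by simp
      moreover have "\<not> ?Q \<le> b" using own(1)[OF abc(1)] cross(3)[OF abc(2)] e(1) by simp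
      moreover have "?Q \<le> c" using own(2)[OF abc(1)] cross(3)[OF abc(3)] e(2) by (metis of_bool_eq_1_iff)
      ultimately show "a \<le> ?Q - 1" "b \<le> ?Q - 1" "?Q - 1 < c" using Q by linarith+
    next
      assume "(?X ! a, ?X' ! a) = (?Y' ! b, ?Y' ! c)"
      then have e: "?X ! a = ?Y' ! b" "?X' ! a = ?Y' ! c" by simp_all
      have "?Q \<le> a" using cross(1)[OF abc(1)] own(4)[OF abc(2)] e(1) by (metis of_bool_eq_1_iff)
      moreover have "\<not> ?Q \<le> b" using own(1)[OF abc(1)] cross(4)[OF abc(2)] e(1) by simp
      moreover have "?Q \<le> c" using own(2)[OF abc(1)] cross(4)[OF abc(3)] e(2) by (metis of_bool_eq_1_iff)
      ultimately show "?Q - 1 < a" "b \<le> ?Q - 1" "?Q - 1 < c" using Q by linarith+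
    }
  qed
qed

theorem lemma4p10:
  fixes lam :: "nat \<Rightarrow> 'a::{field, finite}" and m :: nat
  assumes q_odd_prime_power:
      "\<exists>p k. prime p \<and> odd p \<and> k \<ge> 1 \<and> CARD('a) = p ^ k"
    and q_ge: "CARD('a) \<ge> m + 1"
    and m_ge: "m \<ge> 2"
    and nonzero: "\<forall>i < m. lam i \<noteq> 0"
    and distinct: "\<forall>i < m. \<forall>j < m. i \<noteq> j \<longrightarrow> lam i \<noteq> lam j"
    and neg: "\<forall>t < m div 2. lam (2 * t) = - lam (2 * t + 1)"
  shows "\<forall>i < m. \<forall>j < m. i \<noteq> j \<longrightarrow>
           condB1 (lam i) (lam j) \<and>
           condB2 (2 ^ m) (matching m i) (matching m j) \<and>
           condB3 (2 ^ m) (matching m i) (lam i) (matching m j) (lam j)"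
proof (intro allI impI conjI)
  fix i j assume ij: "i < m" "j < m" "i \<noteq> j"
  show "condB1 (lam i) (lam j)"
    using distinct ij by (simp add: condB1_def)
  show "condB2 (2 ^ m) (matching m i) (matching m j)"
    using condB2_matching[OF ij] .
  show "condB3 (2 ^ m) (matching m i) (lam i) (matching m j) (lam j)"
  proof (cases "lam i = - lam j")
    case True
    then have "i < 2 * (m div 2)" "j = partner i"
      using opposite_labels_imp_partner[OF ij True distinct neg] by simp_all
    then show ?thesis using condB3_partner by simp
  next
    case False
    then show ?thesis by (simp add: condB3_def split_beta)
  qed
qed

end
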